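(* For each $\mathbf b\in\mathcal B$ let $\xi_{\mathbf b}:S\to\mathbb C[[\lambda]]$ be the $\mathbb C[\lambda]$-linear map with $\xi_{\mathbf b}(x^u)=G^{(\mathbf b)}_u(\lambda)$ for $u\in M$. Then each $\xi_{\mathbf b}$ vanishes on $\sum_{i=1}^n D_iS$ and induces a $\mathcal D$-module homomorphism $\mathcal W\to\mathbb C[[\lambda]]$, and the set $\{\xi_{\mathbf b}\}_{\mathbf b\in\mathcal B}$ is a basis of the $\mathbb C$-vector space $\mathrm{Hom}_{\mathcal D}(\mathcal W,\mathbb C[[\lambda]])$.
   Context: Let $A=\{\mathbf a_1,\dots,\mathbf a_m\}\subseteq\mathbb Z^n$ be linearly independent over $\mathbb R$, $\mathbf a_0\in\mathbb Z^n$, and $\ell_0,\ell_1,\dots,\ell_m$ positive integers with greatest common divisor $1$ such that $\ell_0\mathbf a_0=\sum_{j=1}^m\ell_j\mathbf a_j$ and $\ell_0=\sum_{j=1}^m\ell_j$. Write $\mathbf a_j=(a_{1j},\dots,a_{nj})$ and $x^u=x_1^{u_1}\cdots x_n^{u_n}$. Let $f_\lambda=\sum_{j=1}^m\ell_jx^{\mathbf a_j}-\ell_0\lambda x^{\mathbf a_0}$ with $\lambda$ an indeterminate. Let $V$ be the real span of $A$, $V_{\mathbb Z}=V\cap\mathbb Z^n$, $C(A)$ the closed real cone generated by $A$, $M=V_{\mathbb Z}\cap C(A)$. Let $S$ be the free $\mathbb C[\lambda]$-module with basis $\{x^u:u\in M\}$ (a $\mathbb C[\lambda]$-subalgebra of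 $\mathbb C[\lambda][x_1^{\pm1},\dots,x_n^{\pm1}]$). Let $D_i=x_i\partial/\partial x_i+x_i\partial f_\lambda/\partial x_i$ ($i=1,\dots,n$) and $D_\lambda=\partial/\partial\lambda-\ell_0x^{\mathbf a_0}$, operators on $S$. Let $\mathcal D=\mathbb C[\lambda]\langle\partial_\lambda\rangle$; $S$ and $\mathcal W=S/\sum_{i=1}^nD_iS$ are left $\mathcal D$-modules with $\partial_\lambda$ acting as $D_\lambda$; $\mathbb C[[\lambda]]$ is a left $\mathcal D$-module with $\partial_\lambda=d/d\lambda$. Let $P(A)=\{\sum_j c_j\mathbf a_j:0\le c_j<1\}$ and $\mathcal B=V_{\mathbb Z}\cap P(A)$. For $\mathbf b\in\mathcal B$ write uniquely $\mathbf b=\sum_{j=1}^m v_j\mathbf a_j$ with $v_j\in[0,1)\cap\mathbb Q$. For $z\in\mathbb C$, $l\in\mathbb Z$ set $[z]_0=1$, $[z]_l=1/((z+1)(z+2)\cdots(z+l))$ for $l>0$, and $[z]_l=z(z-1)\cdots(z+l+1)$ for $l<0$. For $u\in M$ put $g^{(\mathbf b)}_u=\prod_{j=1}^m[-v_j]_{s_j}\ell_j^{s_j}$ if $u=\sum_{j=1}^m(v_j-s_j)\mathbf a_j$ with all $s_j\in\mathbb Z_{\le0}$, and $g^{(\mathbf b)}_u=0$ otherwise. Define $G^{(\mathbf b)}_u(\lambda)=\sum_{s\ge0}g^{(\mathbf b)}_{u+s\mathbf a_0}\frac{(-\ell_0\lambda)^s}{s!}\in\mathbb C[[\lambda]]$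 (equivalently $\sum_u G^{(\mathbf b)}_u x^{-u}$ is the part of $\exp(-\ell_0\lambda x^{\mathbf a_0})\sum_u g^{(\mathbf b)}_ux^{-u}$ supported on monomials $x^{-u}$, $u\in M$). *)

theory Defs
  imports "HOL-Analysis.Analysis" "HOL-Computational_Algebra.Polynomial_FPS"
begin

(* Lattice points u \<in> Z^n are modelled as  int ^ 'n  ('n a finite index type, n = CARD('n)).
   The vectors a_0, a_1, ..., a_m are  a 0, a 1, ..., a m,  the integers l_0,...,l_m are l 0, ..., l m. *)

definition rvec :: "int ^ 'n \<Rightarrow> real ^ 'n" where
  "rvec u = (\<chi> i. real_of_int (u $ i))"

definition Vspan :: "(nat \<Rightarrow> int ^ 'n) \<Rightarrow> nat \<Rightarrow> (real ^ 'n) set" where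
  "Vspan a m = span ((\<lambda>j. rvec (a j)) ` {1..m})"

definition coneA :: "(nat \<Rightarrow> int ^ 'n) \<Rightarrow> nat \<Rightarrow> (real ^ 'n) set" where
  "coneA a m = {x. \<exists>c::nat \<Rightarrow> real. (\<forall>j\<in>{1..m}. 0 \<le> c j) \<and>
                    x = (\<Sum>j=1..m. c j *\<^sub>R rvec (a j))}"

definition Mset :: "(nat \<Rightarrow> int ^ 'n) \<Rightarrow> nat \<Rightarrow> (int ^ 'n) set" where
  "Mset a m = {u. rvec u \<in> Vspan a m \<and> rvec u \<in> coneA a m}"

definition parA :: "(nat \<Rightarrow> int ^ 'n) \<Rightarrow> nat \<Rightarrow> (real ^ 'n) set" where
  "parA a m = {x. \<exists>c::nat \<Rightarrow> real. (\<forall>j\<in>{1..m}. 0 \<le> c j \<and> c j < 1) \<and>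
                    x = (\<Sum>j=1..m. c j *\<^sub>R rvec (a j))}"

definition Bset :: "(nat \<Rightarrow> int ^ 'n) \<Rightarrow> nat \<Rightarrow> (int ^ 'n) set" where
  "Bset a m = {b. rvec b \<in> Vspan a m \<and> rvec b \<in> parA a m}"

definition vcoef :: "(nat \<Rightarrow> int ^ 'n) \<Rightarrow> nat \<Rightarrow> int ^ 'n \<Rightarrow> nat \<Rightarrow> real" where
  "vcoef a m b = (THE v. (\<forall>j. j \<notin> {1..m} \<longrightarrow> v j = 0) \<and>
                         (\<forall>j\<in>{1..m}. 0 \<le> v j \<and> v j < 1) \<and>
                         rvec b = (\<Sum>j=1..m. v j *\<^sub>R rvec (a j)))"

definition brk :: "complex \<Rightarrow> int \<Rightarrow> complex" where
  "brk z l = (if l = 0 then 1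
              else if l > 0 then 1 / (\<Prod>k=1..nat l. z + of_nat k)
              else (\<Prod>k=0..<nat (- l). z - of_nat k))"

definition sRep :: "(nat \<Rightarrow> int ^ 'n) \<Rightarrow> nat \<Rightarrow> int ^ 'n \<Rightarrow> int ^ 'n \<Rightarrow> (nat \<Rightarrow> int) \<Rightarrow> bool" where
  "sRep a m b u s \<longleftrightarrow> (\<forall>j. j \<notin> {1..m} \<longrightarrow> s j = 0) \<and> (\<forall>j\<in>{1..m}. s j \<le> 0) \<and>
       rvec u = (\<Sum>j=1..m. (vcoef a m b j - real_of_int (s j)) *\<^sub>R rvec (a j))"

definition gcoef :: "(nat \<Rightarrow> int ^ 'n) \<Rightarrow> (nat \<Rightarrow> nat) \<Rightarrow> nat \<Rightarrow> int ^ 'n \<Rightarrow> int ^ 'n \<Rightarrow> complex" where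
  "gcoef a l m b u =
     (if \<exists>s. sRep a m b u s then
        (let s = (THE s. sRep a m b u s) in
          \<Prod>j=1..m. brk (- complex_of_real (vcoef a m b j)) (s j) * (of_nat (l j)) powi (s j))
      else 0)"

definition Gser :: "(nat \<Rightarrow> int ^ 'n) \<Rightarrow> (nat \<Rightarrow> nat) \<Rightarrow> nat \<Rightarrow> int ^ 'n \<Rightarrow> int ^ 'n \<Rightarrow> complex fps" where
  "Gser a l m b u = Abs_fps (\<lambda>k. gcoef a l m b (u + of_nat k *s a 0)
                                  * (- of_nat (l 0)) ^ k / fact k)"

(* S: finitely supported coefficient functions u \<mapsto> p_u \<in> C[\<lambda>], supported on M;
   p represents \<Sum>_u p_u x^u *)
definition Sset :: "(nat \<Rightarrow> int ^ 'n) \<Rightarrow> nat \<Rightarrow> (int ^ 'n \<Rightarrow> complex poly) set" where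
  "Sset a m = {p. finite {u. p u \<noteq> 0} \<and> {u. p u \<noteq> 0} \<subseteq> Mset a m}"

(* D_i = x_i d/dx_i + x_i (d f_\<lambda>/dx_i), acting on coefficient functions:
   D_i x^u = u_i x^u + \<Sum>_j l_j a_{ij} x^{u+a_j} - l_0 a_{i0} \<lambda> x^{u+a_0} *)
definition Dop :: "(nat \<Rightarrow> int ^ 'n) \<Rightarrow> (nat \<Rightarrow> nat) \<Rightarrow> nat \<Rightarrow> 'n \<Rightarrow>
                   (int ^ 'n \<Rightarrow> complex poly) \<Rightarrow> (int ^ 'n \<Rightarrow> complex poly)" where
  "Dop a l m i p = (\<lambda>w. of_int (w $ i) * p w
       + (\<Sum>j=1..m. of_nat (l j) * of_int (a j $ i) * p (w - a j))
       - of_nat (l 0) * of_int (a 0 $ i) * [:0, 1:] * p (w - a 0))"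

(* D_\<lambda> = d/d\<lambda> - l_0 x^{a_0} *)
definition Dlam :: "(nat \<Rightarrow> int ^ 'n) \<Rightarrow> (nat \<Rightarrow> nat) \<Rightarrow>
                   (int ^ 'n \<Rightarrow> complex poly) \<Rightarrow> (int ^ 'n \<Rightarrow> complex poly)" where
  "Dlam a l p = (\<lambda>w. pderiv (p w) - of_nat (l 0) * p (w - a 0))"

definition DS :: "(nat \<Rightarrow> int ^ 'n) \<Rightarrow> (nat \<Rightarrow> nat) \<Rightarrow> nat \<Rightarrow> (int ^ 'n \<Rightarrow> complex poly) set" where
  "DS a l m = {q. \<exists>ps :: 'n \<Rightarrow> (int ^ 'n \<Rightarrow> complex poly).
                    (\<forall>i. ps i \<in> Sset a m) \<and> q = (\<lambda>w. \<Sum>i\<in>UNIV. Dop a l m i (ps i) w)}"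

(* Hom_D(W, C[[\<lambda>]]), realised as maps S \<rightarrow> C[[\<lambda>]] (extended by 0 outside S) that are
   C[\<lambda>]-linear, vanish on \<Sum>_i D_i S, and intertwine D_\<lambda> with d/d\<lambda> *)
definition HomD :: "(nat \<Rightarrow> int ^ 'n) \<Rightarrow> (nat \<Rightarrow> nat) \<Rightarrow> nat \<Rightarrow>
                    ((int ^ 'n \<Rightarrow> complex poly) \<Rightarrow> complex fps) set" where
  "HomD a l m = {\<phi>.
      (\<forall>p. p \<notin> Sset a m \<longrightarrow> \<phi> p = 0) \<and>
      (\<forall>p\<in>Sset a m. \<forall>q\<in>Sset a m. \<phi> (\<lambda>u. p u + q u) = \<phi> p + \<phi> q) \<and>
      (\<forall>r. \<forall>p\<in>Sset a m. \<phi> (\<lambda>u. r * p u) = fps_of_poly r * \<phi> p) \<and>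
      (\<forall>q\<in>DS a l m. \<phi> q = 0) \<and>
      (\<forall>p\<in>Sset a m. \<phi> (Dlam a l p) = fps_deriv (\<phi> p))}"

definition xi :: "(nat \<Rightarrow> int ^ 'n) \<Rightarrow> (nat \<Rightarrow> nat) \<Rightarrow> nat \<Rightarrow> int ^ 'n \<Rightarrow>
                  (int ^ 'n \<Rightarrow> complex poly) \<Rightarrow> complex fps" where
  "xi a l m b p = (if p \<in> Sset a m
                   then (\<Sum>u\<in>{u. p u \<noteq> 0}. fps_of_poly (p u) * Gser a l m b u)
                   else 0)"

end

theory Submission
  imports Defs
begin

text \<open>
A homomorphism \<phi> from W to C[[\<lambda>]] is determined by the family G u = \<phi>(x^u), u \<in> M, and the
defining conditions on \<phi> say exactly that G solves the adjoint system
  u_i G_u + \<Sum>_j l_j a_ij G_(u+a_j) - l_0 a_i0 \<lambda> G_(u+a_0) = 0,    G_u' = - l_0 G_(u+a_0).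
Since u = \<Sum>_j (v_j - s_j) a_j and passing from u to u + a_j multiplies g^(b)_u by
(s_j - v_j)/l_j, the coefficients g^(b) solve the first equation at \<lambda> = 0; the exponential shift
defining G^(b) then yields both equations, and G^(b)_(b')(0) is the Kronecker delta on B.
Conversely, for any solution the constant term of the first equation and the linear independence
of A show that a vanishing constant term at u forces vanishing constant terms at all u + a_j.
Every point of M is b + \<Sum>_j t_j a_j with b \<in> B, so constant terms that vanish on B vanish on
M, and the second equation kills all higher coefficients. Hence a homomorphism is determined by
its constant terms on B, and the \<xi>_b form a basis.
\<close>

lemma rvec_add [simp]: "rvec (u + v) = rvec u + rvec v"
  and rvec_diff [simp]: "rvec (u - v) = rvec u - rvec v"
  and rvec_zero [simp]: "rvec 0 = 0"
  and rvec_of_nat_scale [simp]: "rvec (of_nat k *s u) = real k *\<^sub>R rvec u"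
  and rvec_nth: "rvec u $ i = real_of_int (u $ i)"
  by (simp_all add: rvec_def vec_eq_iff)

lemma rvec_sum: "rvec (sum f A) = (\<Sum>x\<in>A. rvec (f x))"
  by (induction A rule: infinite_finite_induct) auto

lemma rvec_inject: "rvec u = rvec v \<longleftrightarrow> u = v"
  by (simp add: rvec_def vec_eq_iff)

lemma independent_image_coeff_eq_0:
  fixes v :: "'i \<Rightarrow> 'a::real_vector"
  assumes indep: "independent (v ` I)" and inj: "inj_on v I" and "finite I"
    and sum0: "(\<Sum>i\<in>I. c i *\<^sub>R v i) = 0" and i: "i \<in> I"
  shows "c i = 0"
proof -
  define c' where "c' x = c (inv_into I v x)" for x
  have "(\<Sum>x\<in>v ` I. c' x *\<^sub>R x) = (\<Sum>i\<in>I. c i *\<^sub>R v i)"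
    by (simp add: sum.reindex[OF inj] c'_def inv_into_f_f[OF inj])
  with sum0 have "c' (v i) = 0"
    using independentD[OF indep finite_imageI[OF \<open>finite I\<close>] subset_refl, of c'] i by simp
  then show ?thesis
    by (simp add: c'_def inv_into_f_f[OF inj i])
qed

lemma independent_image_coeff_unique:
  fixes v :: "'i \<Rightarrow> 'a::real_vector"
  assumes "independent (v ` I)" "inj_on v I" "finite I"
    and "(\<Sum>i\<in>I. c i *\<^sub>R v i) = (\<Sum>i\<in>I. d i *\<^sub>R v i)" "i \<in> I"
  shows "c i = d i"
  using independent_image_coeff_eq_0[of v I "\<lambda>i. c i - d i"] assms
  by (simp add: scaleR_diff_left sum_subtractf)

lemma independent_image_complex_coeff_eq_0:
  fixes v :: "'i \<Rightarrow> real ^ 'n" and c :: "'i \<Rightarrow> complex"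
  assumes "independent (v ` I)" "inj_on v I" "finite I"
    and sum0: "\<And>k. (\<Sum>i\<in>I. c i * of_real (v i $ k)) = 0" and "i \<in> I"
  shows "c i = 0"
proof -
  have "(\<Sum>i\<in>I. Re (c i) *\<^sub>R v i) = 0" "(\<Sum>i\<in>I. Im (c i) *\<^sub>R v i) = 0"
    using arg_cong[OF sum0, of Re] arg_cong[OF sum0, of Im]
    by (simp_all add: vec_eq_iff mult.commute)
  then show ?thesis
    using independent_image_coeff_eq_0[OF assms(1-3) _ \<open>i \<in> I\<close>, where c="\<lambda>i. Re (c i)"]
      independent_image_coeff_eq_0[OF assms(1-3) _ \<open>i \<in> I\<close>, where c="\<lambda>i. Im (c i)"]
    by (simp add: complex_eq_iff)
qed

lemma brk_pred:
  assumes "s \<le> 0"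
  shows "brk z (s - 1) = brk z s * (z + of_int s)"
proof -
  have "nat (- (s - 1)) = Suc (nat (- s))"
    using assms by simp
  then show ?thesis
    using assms by (simp add: brk_def)
qed

section \<open>Coefficient functions and their pairing with power series\<close>

definition supp :: "('a \<Rightarrow> 'b::zero) \<Rightarrow> 'a set" where
  "supp p = {u. p u \<noteq> 0}"

definition xpow :: "'a \<Rightarrow> 'a \<Rightarrow> 'b::zero_neq_one" where
  "xpow u = (\<lambda>w. if w = u then 1 else 0)"

definition lin_ext :: "('a \<Rightarrow> 'b::comm_ring_1 fps) \<Rightarrow> ('a \<Rightarrow> 'b poly) \<Rightarrow> 'b fps" where
  "lin_ext G p = (\<Sum>u\<in>supp p. fps_of_poly (p u) * G u)"

lemma supp_xpow [simp]: "supp (xpow u :: 'a \<Rightarrow> 'b::zero_neq_one) = {u}"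
  by (auto simp: supp_def xpow_def)

lemma lin_ext_superset:
  "finite F \<Longrightarrow> supp p \<subseteq> F \<Longrightarrow> lin_ext G p = (\<Sum>u\<in>F. fps_of_poly (p u) * G u)"
  unfolding lin_ext_def by (rule sum.mono_neutral_left) (auto simp: supp_def)

lemma lin_ext_xpow [simp]: "lin_ext G (xpow u) = G u"
  unfolding lin_ext_def supp_xpow by (simp add: xpow_def)

lemma lin_ext_add:
  assumes "finite (supp p)" "finite (supp q)"
  shows "lin_ext G (\<lambda>u. p u + q u) = lin_ext G p + lin_ext G q"
proof -
  let ?F = "supp p \<union> supp q"
  have "supp (\<lambda>u. p u + q u) \<subseteq> ?F"
    by (auto simp: supp_def)
  then show ?thesis
    using assms by (simp add: lin_ext_superset[of ?F] fps_of_poly_add ring_distribs sum.distrib)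
qed

lemma lin_ext_scale:
  assumes "finite (supp p)"
  shows "lin_ext G (\<lambda>u. r * p u) = fps_of_poly r * lin_ext G p"
proof -
  have "supp (\<lambda>u. r * p u) \<subseteq> supp p"
    by (auto simp: supp_def)
  then show ?thesis
    using assms
    by (simp add: lin_ext_superset[of "supp p"] fps_of_poly_mult sum_distrib_left mult.assoc)
qed

lemma lin_ext_sum:
  assumes "finite I" "\<And>i. i \<in> I \<Longrightarrow> finite (supp (f i))"
  shows "lin_ext G (\<lambda>w. \<Sum>i\<in>I. f i w) = (\<Sum>i\<in>I. lin_ext G (f i))"
  using assms
proof (induction I rule: finite_induct)
  case empty
  then show ?case
    by (simp add: lin_ext_def supp_def)
next
  case (insert x I)
  have "supp (\<lambda>w. \<Sum>i\<in>I. f i w) \<subseteq> (\<Union>i\<in>I. supp (f i))"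
    by (auto simp: supp_def intro: ccontr)
  then have "finite (supp (\<lambda>w. \<Sum>i\<in>I. f i w))"
    using insert by (auto intro: finite_subset)
  then show ?case
    using insert by (simp add: lin_ext_add)
qed

lemma supp_translate:
  fixes p :: "'a::group_add \<Rightarrow> 'b::zero"
  shows "supp (\<lambda>w. p (w - d)) = (\<lambda>u. u + d) ` supp p"
  by (force simp: supp_def image_iff intro: exI[of _ "_ - d"])

lemma lin_ext_translate:
  fixes p :: "'a::group_add \<Rightarrow> 'b::comm_ring_1 poly"
  shows "lin_ext G (\<lambda>w. p (w - d)) = lin_ext (\<lambda>u. G (u + d)) p"
  unfolding lin_ext_def supp_translate by (simp add: sum.reindex inj_on_def)

definition Dop_adj :: "(nat \<Rightarrow> int ^ 'n) \<Rightarrow> (nat \<Rightarrow> nat) \<Rightarrow> nat \<Rightarrow>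
    (int ^ 'n \<Rightarrow> complex fps) \<Rightarrow> 'n \<Rightarrow> int ^ 'n \<Rightarrow> complex fps" where
  "Dop_adj a l m G i u = fps_const (of_int (u $ i)) * G u
     + (\<Sum>j=1..m. fps_const (of_nat (l j) * of_int (a j $ i)) * G (u + a j))
     - fps_const (of_nat (l 0) * of_int (a 0 $ i)) * fps_X * G (u + a 0)"

lemma Dop_adj_nth:
  "fps_nth (Dop_adj a l m G i u) k = of_int (u $ i) * fps_nth (G u) k
     + (\<Sum>j=1..m. of_nat (l j) * of_int (a j $ i) * fps_nth (G (u + a j)) k)
     - of_nat (l 0) * of_int (a 0 $ i) * (if k = 0 then 0 else fps_nth (G (u + a 0)) (k - 1))"
  by (simp add: Dop_adj_def fps_sum_nth fps_mult_left_const_nth mult.assoc fps_X_mult_nth)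

lemma fps_of_poly_of_nat: "fps_of_poly (of_nat k) = fps_const (of_nat k)"
  and fps_of_poly_of_int: "fps_of_poly (of_int z) = fps_const (of_int z)"
  by (simp_all only: of_nat_poly of_int_poly fps_of_poly_const)

lemma supp_Dop_subset:
  "supp (Dop a l m i p) \<subseteq> supp p \<union> (\<Union>j\<in>{0..m}. (\<lambda>u. u + a j) ` supp p)"
proof -
  have "p (w - a j) = 0" if "w \<notin> (\<lambda>u. u + a j) ` supp p" for w j
    using that by (auto simp: supp_def image_iff)
  then show ?thesis
    by (auto simp: supp_def Dop_def)
qed

lemma supp_Dlam_subset: "supp (Dlam a l p) \<subseteq> supp p \<union> (\<lambda>u. u + a 0) ` supp p"
proof -
  have "p (w - a 0) = 0" if "w \<notin> (\<lambda>u. u + a 0) ` supp p" for w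
    using that by (auto simp: supp_def image_iff)
  then show ?thesis
    by (auto simp: supp_def Dlam_def)
qed

lemma lin_ext_Dop:
  assumes "finite (supp p)"
  shows "lin_ext G (Dop a l m i p) = lin_ext (Dop_adj a l m G i) p"
proof -
  define F where "F = supp p \<union> (\<Union>j\<in>{0..m}. (\<lambda>u. u + a j) ` supp p)"
  have F: "finite F" "supp p \<subseteq> F" "supp (Dop a l m i p) \<subseteq> F"
    using assms supp_Dop_subset[of a l m i p] by (auto simp: F_def)
  have shift: "(\<Sum>w\<in>F. fps_of_poly (p (w - a j)) * G w) = lin_ext (\<lambda>u. G (u + a j)) p"
    if "j \<in> {0..m}" for j
  proof -
    have "supp (\<lambda>w. p (w - a j)) \<subseteq> F"
      using that by (auto simp: F_def supp_translate)
    then show ?thesis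
      using F(1) by (simp flip: lin_ext_superset add: lin_ext_translate)
  qed
  define c where "c j = fps_const (of_nat (l j) * of_int (a j $ i) :: complex)" for j
  have Dop_fps: "fps_of_poly (Dop a l m i p w) = fps_const (of_int (w $ i)) * fps_of_poly (p w)
      + (\<Sum>j=1..m. c j * fps_of_poly (p (w - a j)))
      - c 0 * (fps_X * fps_of_poly (p (w - a 0)))" for w
    unfolding Dop_def c_def
    by (simp only: fps_of_poly_add fps_of_poly_diff fps_of_poly_mult fps_of_poly_sum
        fps_of_poly_of_int fps_of_poly_of_nat fps_of_poly_fps_X fps_const_mult[symmetric]
        mult.assoc)
  have "lin_ext G (Dop a l m i p) = (\<Sum>w\<in>F. fps_of_poly (Dop a l m i p w) * G w)"
    using F by (simp add: lin_ext_superset)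
  also have "\<dots> = (\<Sum>w\<in>F. fps_of_poly (p w) * (fps_const (of_int (w $ i)) * G w))
      + (\<Sum>j=1..m. c j * (\<Sum>w\<in>F. fps_of_poly (p (w - a j)) * G w))
      - c 0 * fps_X * (\<Sum>w\<in>F. fps_of_poly (p (w - a 0)) * G w)"
    unfolding Dop_fps
    by (simp add: ring_distribs sum.distrib sum_subtractf sum_distrib_left sum_distrib_right
        mult.assoc mult.left_commute) (rule sum.swap)
  also have "\<dots> = lin_ext (\<lambda>u. fps_const (of_int (u $ i)) * G u) p
      + (\<Sum>j=1..m. c j * lin_ext (\<lambda>u. G (u + a j)) p)
      - c 0 * fps_X * lin_ext (\<lambda>u. G (u + a 0)) p"
    using F by (simp add: shift lin_ext_superset)
  also have "\<dots> = lin_ext (Dop_adj a l m G i) p"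
    unfolding lin_ext_def Dop_adj_def c_def[symmetric]
    by (simp add: ring_distribs sum.distrib sum_subtractf sum_distrib_left
        mult.assoc mult.left_commute) (rule sum.swap)
  finally show ?thesis .
qed

lemma lin_ext_Dlam:
  assumes "finite (supp p)"
    and deriv: "\<And>u. u \<in> supp p \<Longrightarrow> fps_deriv (G u) = - fps_const (of_nat (l 0)) * G (u + a 0)"
  shows "lin_ext G (Dlam a l p) = fps_deriv (lin_ext G p)"
proof -
  define F where "F = supp p \<union> (\<lambda>u. u + a 0) ` supp p"
  have F: "finite F" "supp p \<subseteq> F" "supp (Dlam a l p) \<subseteq> F" "supp (\<lambda>w. p (w - a 0)) \<subseteq> F"
    using assms supp_Dlam_subset[of a l p] by (auto simp: F_def supp_translate)
  have "lin_ext G (Dlam a l p)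
      = (\<Sum>w\<in>F. fps_deriv (fps_of_poly (p w)) * G w)
        - fps_const (of_nat (l 0)) * (\<Sum>w\<in>F. fps_of_poly (p (w - a 0)) * G w)"
    using F by (simp add: lin_ext_superset Dlam_def fps_of_poly_diff fps_of_poly_mult
        fps_of_poly_pderiv fps_of_poly_of_nat ring_distribs sum_subtractf
        sum_distrib_left mult.assoc)
  also have "(\<Sum>w\<in>F. fps_deriv (fps_of_poly (p w)) * G w)
      = (\<Sum>u\<in>supp p. fps_deriv (fps_of_poly (p u)) * G u)"
    by (rule sum.mono_neutral_right[OF F(1,2)]) (auto simp: supp_def)
  also have "(\<Sum>w\<in>F. fps_of_poly (p (w - a 0)) * G w) = lin_ext (\<lambda>u. G (u + a 0)) p"
    using F by (simp flip: lin_ext_superset add: lin_ext_translate)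
  also have "(\<Sum>u\<in>supp p. fps_deriv (fps_of_poly (p u)) * G u)
      - fps_const (of_nat (l 0)) * lin_ext (\<lambda>u. G (u + a 0)) p = fps_deriv (lin_ext G p)"
  proof -
    have "(\<Sum>u\<in>supp p. fps_of_poly (p u) * fps_deriv (G u))
        = - (fps_const (of_nat (l 0)) * lin_ext (\<lambda>u. G (u + a 0)) p)"
      by (simp add: deriv lin_ext_def sum_distrib_left sum_negf[symmetric] mult.left_commute
          flip: fps_const_neg cong: sum.cong)
    moreover have "fps_deriv (lin_ext G p) = (\<Sum>u\<in>supp p. fps_deriv (fps_of_poly (p u)) * G u)
        + (\<Sum>u\<in>supp p. fps_of_poly (p u) * fps_deriv (G u))"
      by (simp add: lin_ext_def fps_deriv_sum sum.distrib add.commute)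
    ultimately show ?thesis
      by simp
  qed
  finally show ?thesis .
qed

section \<open>Homomorphisms into formal power series\<close>

lemma Sset_iff: "p \<in> Sset a m \<longleftrightarrow> finite (supp p) \<and> supp p \<subseteq> Mset a m"
  by (simp add: Sset_def supp_def)

lemma xpow_in_Sset: "u \<in> Mset a m \<Longrightarrow> xpow u \<in> Sset a m"
  by (simp add: Sset_iff)

lemma zero_in_Sset: "(\<lambda>u. 0) \<in> Sset a m"
  by (simp add: Sset_iff supp_def)

lemma Sset_add:
  assumes "p \<in> Sset a m" "q \<in> Sset a m"
  shows "(\<lambda>u. p u + q u) \<in> Sset a m"
proof -
  have "supp (\<lambda>u. p u + q u) \<subseteq> supp p \<union> supp q"
    by (auto simp: supp_def)
  then show ?thesis
    using assms by (auto simp: Sset_iff intro: finite_subset)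
qed

lemma Sset_scale:
  assumes "p \<in> Sset a m"
  shows "(\<lambda>u. r * p u) \<in> Sset a m"
proof -
  have "supp (\<lambda>u. r * p u) \<subseteq> supp p"
    by (auto simp: supp_def)
  then show ?thesis
    using assms by (auto simp: Sset_iff intro: finite_subset)
qed

lemma Sset_sum:
  "finite I \<Longrightarrow> (\<And>i. i \<in> I \<Longrightarrow> f i \<in> Sset a m) \<Longrightarrow> (\<lambda>w. \<Sum>i\<in>I. f i w) \<in> Sset a m"
  by (induction I rule: finite_induct) (simp_all add: zero_in_Sset Sset_add)

lemma HomD_outside: "\<phi> \<in> HomD a l m \<Longrightarrow> p \<notin> Sset a m \<Longrightarrow> \<phi> p = 0"
  and HomD_add: "\<phi> \<in> HomD a l m \<Longrightarrow> p \<in> Sset a m \<Longrightarrow> q \<in> Sset a m \<Longrightarrow>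
      \<phi> (\<lambda>u. p u + q u) = \<phi> p + \<phi> q"
  and HomD_scale: "\<phi> \<in> HomD a l m \<Longrightarrow> p \<in> Sset a m \<Longrightarrow>
      \<phi> (\<lambda>u. r * p u) = fps_of_poly r * \<phi> p"
  and HomD_DS: "\<phi> \<in> HomD a l m \<Longrightarrow> q \<in> DS a l m \<Longrightarrow> \<phi> q = 0"
  and HomD_Dlam: "\<phi> \<in> HomD a l m \<Longrightarrow> p \<in> Sset a m \<Longrightarrow> \<phi> (Dlam a l p) = fps_deriv (\<phi> p)"
  unfolding HomD_def by blast+

lemma HomD_eq_lin_ext:
  assumes \<phi>: "\<phi> \<in> HomD a l m" and p: "p \<in> Sset a m"
  shows "\<phi> p = lin_ext (\<lambda>u. \<phi> (xpow u)) p"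
proof -
  have restrict: "\<phi> (\<lambda>w. if w \<in> F then p w else 0) = (\<Sum>u\<in>F. fps_of_poly (p u) * \<phi> (xpow u))"
    if "finite F" "F \<subseteq> Mset a m" for F
    using that
  proof (induction F rule: finite_induct)
    case empty
    show ?case
      using HomD_scale[OF \<phi> zero_in_Sset, of 0] by simp
  next
    case (insert u F)
    have "supp (\<lambda>w. if w \<in> F then p w else 0) \<subseteq> F"
      by (auto simp: supp_def)
    then have restr: "(\<lambda>w. if w \<in> F then p w else 0) \<in> Sset a m"
      using insert by (auto simp: Sset_iff intro: finite_subset)
    have u: "xpow u \<in> Sset a m"
      using insert by (simp add: xpow_in_Sset)
    have "(\<lambda>w. if w \<in> insert u F then p w else 0)
        = (\<lambda>w. p u * xpow u w + (if w \<in> F then p w else 0))"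
      using insert(2) by (auto simp: xpow_def)
    then show ?case
      using insert HomD_add[OF \<phi> Sset_scale[OF u] restr] HomD_scale[OF \<phi> u] by simp
  qed
  have "(\<lambda>w. if w \<in> supp p then p w else 0) = p"
    by (auto simp: supp_def)
  then show ?thesis
    using restrict[of "supp p"] p by (simp add: Sset_iff lin_ext_def)
qed

lemma HomD_lincomb:
  assumes "finite B" and f: "\<And>b. b \<in> B \<Longrightarrow> f b \<in> HomD a l m"
  shows "(\<lambda>p. \<Sum>b\<in>B. fps_const (c b) * f b p) \<in> HomD a l m"
  unfolding HomD_def mem_Collect_eq
proof (intro conjI ballI allI impI)
  fix p q r
  assume p: "p \<in> Sset a m" and q: "q \<in> Sset a m"
  show "(\<Sum>b\<in>B. fps_const (c b) * f b (\<lambda>u. p u + q u))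
      = (\<Sum>b\<in>B. fps_const (c b) * f b p) + (\<Sum>b\<in>B. fps_const (c b) * f b q)"
    by (simp add: HomD_add[OF f p q] ring_distribs sum.distrib cong: sum.cong)
  show "(\<Sum>b\<in>B. fps_const (c b) * f b (\<lambda>u. r * p u))
      = fps_of_poly r * (\<Sum>b\<in>B. fps_const (c b) * f b p)"
    by (simp add: HomD_scale[OF f p] sum_distrib_left mult.left_commute cong: sum.cong)
  show "(\<Sum>b\<in>B. fps_const (c b) * f b (Dlam a l p)) = fps_deriv (\<Sum>b\<in>B. fps_const (c b) * f b p)"
    by (simp add: HomD_Dlam[OF f p] fps_deriv_sum cong: sum.cong)
next
  fix p
  assume "p \<notin> Sset a m"
  then show "(\<Sum>b\<in>B. fps_const (c b) * f b p) = 0"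
    by (simp add: HomD_outside[OF f] cong: sum.cong)
next
  fix q
  assume "q \<in> DS a l m"
  then show "(\<Sum>b\<in>B. fps_const (c b) * f b q) = 0"
    by (simp add: HomD_DS[OF f] cong: sum.cong)
qed

lemma HomD_diff:
  assumes \<phi>: "\<phi> \<in> HomD a l m" and \<psi>: "\<psi> \<in> HomD a l m"
  shows "(\<lambda>p. \<phi> p - \<psi> p) \<in> HomD a l m"
  unfolding HomD_def mem_Collect_eq
proof (intro conjI ballI allI impI)
  fix p q r
  assume p: "p \<in> Sset a m" and q: "q \<in> Sset a m"
  show "\<phi> (\<lambda>u. p u + q u) - \<psi> (\<lambda>u. p u + q u) = (\<phi> p - \<psi> p) + (\<phi> q - \<psi> q)"
    by (simp add: HomD_add[OF \<phi> p q] HomD_add[OF \<psi> p q])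
  show "\<phi> (\<lambda>u. r * p u) - \<psi> (\<lambda>u. r * p u) = fps_of_poly r * (\<phi> p - \<psi> p)"
    by (simp add: HomD_scale[OF \<phi> p] HomD_scale[OF \<psi> p] right_diff_distrib)
  show "\<phi> (Dlam a l p) - \<psi> (Dlam a l p) = fps_deriv (\<phi> p - \<psi> p)"
    by (simp add: HomD_Dlam[OF \<phi> p] HomD_Dlam[OF \<psi> p])
next
  fix p
  assume "p \<notin> Sset a m"
  then show "\<phi> p - \<psi> p = 0"
    by (simp add: HomD_outside[OF \<phi>] HomD_outside[OF \<psi>])
next
  fix q
  assume "q \<in> DS a l m"
  then show "\<phi> q - \<psi> q = 0"
    by (simp add: HomD_DS[OF \<phi>] HomD_DS[OF \<psi>])
qed

lemma xi_eq_lin_ext: "p \<in> Sset a m \<Longrightarrow> xi a l m b p = lin_ext (Gser a l m b) p"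
  by (simp add: xi_def lin_ext_def supp_def)

lemma Gser_nth:
  "fps_nth (Gser a l m b u) k = gcoef a l m b (u + of_nat k *s a 0) * (- of_nat (l 0)) ^ k / fact k"
  by (simp add: Gser_def)

lemma fps_deriv_Gser:
  "fps_deriv (Gser a l m b u) = - fps_const (of_nat (l 0)) * Gser a l m b (u + a 0)"
proof (rule fps_ext)
  fix k
  have "u + of_nat (Suc k) *s a 0 = u + a 0 + of_nat k *s a 0"
    by (simp add: vec_eq_iff algebra_simps)
  then show "fps_nth (fps_deriv (Gser a l m b u)) k
      = fps_nth (- fps_const (of_nat (l 0)) * Gser a l m b (u + a 0)) k"
    by (simp add: Gser_nth fps_deriv_nth fact_Suc field_simps del: of_nat_Suc)
qed

lemma Dop_in_DS:
  assumes "p \<in> Sset a m"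
  shows "Dop a l m i p \<in> DS a l m"
proof -
  define ps where "ps i' = (if i' = i then p else (\<lambda>_. 0))" for i'
  have "Dop a l m i' (\<lambda>_. 0) = (\<lambda>_. 0)" for i'
    by (simp add: Dop_def fun_eq_iff)
  then have "Dop a l m i p = (\<lambda>w. \<Sum>i'\<in>UNIV. Dop a l m i' (ps i') w)"
    by (simp add: ps_def if_distrib[of "\<lambda>q. Dop a l m _ q _"] cong: if_cong)
  moreover have "\<forall>i'. ps i' \<in> Sset a m"
    using assms by (simp add: ps_def zero_in_Sset)
  ultimately show ?thesis
    unfolding DS_def by blast
qed

lemma Dlam_xpow: "Dlam a l (xpow u) = (\<lambda>w. - of_nat (l 0) * xpow (u + a 0) w)"
  by (auto simp: Dlam_def xpow_def fun_eq_iff)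

section \<open>The cone M and the parallelepiped B\<close>

locale positive_relation =
  fixes a :: "nat \<Rightarrow> int ^ 'n" and l :: "nat \<Rightarrow> nat" and m :: nat
  assumes indep: "independent ((\<lambda>j. rvec (a j)) ` {1..m})"
    and inj: "inj_on a {1..m}"
    and lpos: "\<forall>j\<in>{0..m}. 0 < l j"
    and rel: "of_nat (l 0) *s a 0 = (\<Sum>j=1..m. of_nat (l j) *s a j)"
begin

abbreviation ra :: "nat \<Rightarrow> real ^ 'n" where
  "ra j \<equiv> rvec (a j)"

lemma inj_on_ra: "inj_on ra {1..m}"
  using inj rvec_inject unfolding inj_on_def by blast

lemma coord_unique:
  assumes "(\<Sum>j=1..m. c j *\<^sub>R ra j) = (\<Sum>j=1..m. d j *\<^sub>R ra j)" "j \<in> {1..m}"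
  shows "c j = d j"
  using independent_image_coeff_unique[OF indep inj_on_ra _ assms] by simp

lemma l_nonzero: "j \<in> {0..m} \<Longrightarrow> l j \<noteq> 0"
  using lpos by auto

lemma comb_in_Vspan: "(\<Sum>j=1..m. c j *\<^sub>R ra j) \<in> Vspan a m"
  unfolding Vspan_def by (intro span_sum span_scale span_base) auto

lemma Mset_iff: "u \<in> Mset a m \<longleftrightarrow> (\<exists>c. (\<forall>j\<in>{1..m}. 0 \<le> c j) \<and> rvec u = (\<Sum>j=1..m. c j *\<^sub>R ra j))"
proof
  assume "\<exists>c. (\<forall>j\<in>{1..m}. 0 \<le> c j) \<and> rvec u = (\<Sum>j=1..m. c j *\<^sub>R ra j)"
  then obtain c where "\<forall>j\<in>{1..m}. 0 \<le> c j" "rvec u = (\<Sum>j=1..m. c j *\<^sub>R ra j)"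
    by blast
  then show "u \<in> Mset a m"
    using comb_in_Vspan[of c] unfolding Mset_def coneA_def by auto
qed (auto simp: Mset_def coneA_def)

lemma Bset_iff:
  "b \<in> Bset a m \<longleftrightarrow> (\<exists>c. (\<forall>j\<in>{1..m}. 0 \<le> c j \<and> c j < 1) \<and> rvec b = (\<Sum>j=1..m. c j *\<^sub>R ra j))"
proof
  assume "\<exists>c. (\<forall>j\<in>{1..m}. 0 \<le> c j \<and> c j < 1) \<and> rvec b = (\<Sum>j=1..m. c j *\<^sub>R ra j)"
  then obtain c where "\<forall>j\<in>{1..m}. 0 \<le> c j \<and> c j < 1" "rvec b = (\<Sum>j=1..m. c j *\<^sub>R ra j)"
    by blast
  then show "b \<in> Bset a m"
    using comb_in_Vspan[of c] unfolding Bset_def parA_def by auto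
qed (auto simp: Bset_def parA_def)

lemma Bset_subset_Mset: "b \<in> Bset a m \<Longrightarrow> b \<in> Mset a m"
  unfolding Bset_iff Mset_iff by (metis less_imp_le)

lemma Mset_add:
  assumes "u \<in> Mset a m" "v \<in> Mset a m"
  shows "u + v \<in> Mset a m"
proof -
  obtain c d where "\<forall>j\<in>{1..m}. 0 \<le> c j" "rvec u = (\<Sum>j=1..m. c j *\<^sub>R ra j)"
      "\<forall>j\<in>{1..m}. 0 \<le> d j" "rvec v = (\<Sum>j=1..m. d j *\<^sub>R ra j)"
    using assms unfolding Mset_iff by blast
  then show ?thesis
    unfolding Mset_iff by (intro exI[of _ "\<lambda>j. c j + d j"]) (simp add: scaleR_add_left sum.distrib)
qed

lemma zero_in_Mset: "0 \<in> Mset a m"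
  unfolding Mset_iff by (intro exI[of _ "\<lambda>j. 0"]) auto

lemma of_nat_scale_in_Mset: "u \<in> Mset a m \<Longrightarrow> of_nat k *s u \<in> Mset a m"
proof (induction k)
  case (Suc k)
  have "of_nat (Suc k) *s u = of_nat k *s u + u"
    by (simp add: vec_eq_iff algebra_simps)
  then show ?case
    using Suc Mset_add by simp
qed (simp add: zero_in_Mset)

lemma sum_delta_scaleR:
  assumes "j \<in> {1..m}"
  shows "(\<Sum>k=1..m. (if k = j then x else 0) *\<^sub>R ra k) = x *\<^sub>R ra j"
proof -
  have "(\<Sum>k=1..m. (if k = j then x else 0) *\<^sub>R ra k) = (\<Sum>k=1..m. if k = j then x *\<^sub>R ra k else 0)"
    by (intro sum.cong) auto
  then show ?thesis
    using assms by simp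
qed

lemma a_in_Mset: "j \<in> {1..m} \<Longrightarrow> a j \<in> Mset a m"
  unfolding Mset_iff
  by (intro exI[of _ "\<lambda>k. if k = j then 1 else 0"]) (use sum_delta_scaleR[of j 1] in auto)

lemma a0_in_Mset: "a 0 \<in> Mset a m"
proof -
  have rel_real: "real (l 0) *\<^sub>R ra 0 = (\<Sum>j=1..m. real (l j) *\<^sub>R ra j)"
    using arg_cong[OF rel, of rvec] by (simp add: rvec_sum)
  have "ra 0 = (1 / real (l 0)) *\<^sub>R (real (l 0) *\<^sub>R ra 0)"
    using l_nonzero[of 0] by simp
  also have "\<dots> = (\<Sum>j=1..m. (real (l j) / real (l 0)) *\<^sub>R ra j)"
    unfolding rel_real by (simp add: scaleR_sum_right)
  finally have "ra 0 = (\<Sum>j=1..m. (real (l j) / real (l 0)) *\<^sub>R ra j)" .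
  then show ?thesis
    unfolding Mset_iff by (intro exI[of _ "\<lambda>j. real (l j) / real (l 0)"]) auto
qed

lemma vcoef_spec:
  assumes "b \<in> Bset a m"
  shows "\<forall>j\<in>{1..m}. 0 \<le> vcoef a m b j \<and> vcoef a m b j < 1"
    and "rvec b = (\<Sum>j=1..m. vcoef a m b j *\<^sub>R ra j)"
proof -
  obtain c where c: "\<forall>j\<in>{1..m}. 0 \<le> c j \<and> c j < 1" "rvec b = (\<Sum>j=1..m. c j *\<^sub>R ra j)"
    using assms Bset_iff by blast
  define c' where "c' j = (if j \<in> {1..m} then c j else 0)" for j
  let ?P = "\<lambda>v. (\<forall>j. j \<notin> {1..m} \<longrightarrow> v j = 0) \<and> (\<forall>j\<in>{1..m}. 0 \<le> v j \<and> v j < 1)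
      \<and> rvec b = (\<Sum>j=1..m. v j *\<^sub>R ra j)"
  have "?P c'"
    using c by (simp add: c'_def)
  moreover have "v = c'" if "?P v" for v
  proof
    fix j
    show "v j = c' j"
      using that \<open>?P c'\<close> coord_unique[of v c' j] by (cases "j \<in> {1..m}") auto
  qed
  ultimately have "?P (vcoef a m b)"
    unfolding vcoef_def by (rule theI)
  then show "\<forall>j\<in>{1..m}. 0 \<le> vcoef a m b j \<and> vcoef a m b j < 1"
    and "rvec b = (\<Sum>j=1..m. vcoef a m b j *\<^sub>R ra j)"
    by blast+
qed

lemma finite_Bset: "finite (Bset a m)"
proof -
  define K where "K i = (\<Sum>j=1..m. \<bar>a j $ i\<bar>)" for i
  have bound: "\<bar>b $ i\<bar> \<le> K i" if b: "b \<in> Bset a m" for b i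
  proof -
    have "real_of_int (b $ i) = (\<Sum>j=1..m. vcoef a m b j * real_of_int (a j $ i))"
      using arg_cong[OF vcoef_spec(2)[OF b], of "\<lambda>x. x $ i"] by (simp add: rvec_nth)
    also have "\<bar>\<dots>\<bar> \<le> (\<Sum>j=1..m. real_of_int \<bar>a j $ i\<bar>)"
    proof (intro order.trans[OF sum_abs] sum_mono)
      fix j
      assume "j \<in> {1..m}"
      then have "0 \<le> vcoef a m b j" "vcoef a m b j \<le> 1"
        using vcoef_spec(1)[OF b] by (auto intro: less_imp_le)
      then show "\<bar>vcoef a m b j * real_of_int (a j $ i)\<bar> \<le> real_of_int \<bar>a j $ i\<bar>"
        by (simp add: abs_mult mult_left_le_one_le)
    qed
    also have "\<dots> = real_of_int (K i)"
      by (simp add: K_def)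
    finally have "real_of_int \<bar>b $ i\<bar> \<le> real_of_int (K i)"
      by simp
    then show ?thesis
      by (simp only: of_int_le_iff)
  qed
  have "Bset a m \<subseteq> vec_lambda ` (\<Pi>\<^sub>E i\<in>UNIV. {- K i..K i})"
  proof
    fix b
    assume "b \<in> Bset a m"
    then have "vec_nth b \<in> (\<Pi>\<^sub>E i\<in>UNIV. {- K i..K i})"
      using bound[OF \<open>b \<in> Bset a m\<close>] by (simp add: abs_le_iff minus_le_iff PiE_iff)
    then show "b \<in> vec_lambda ` (\<Pi>\<^sub>E i\<in>UNIV. {- K i..K i})"
      by (rule rev_image_eqI) simp
  qed
  moreover have "finite (vec_lambda ` (\<Pi>\<^sub>E i\<in>UNIV. {- K i..K i}))"
    by (intro finite_imageI finite_PiE) auto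
  ultimately show ?thesis
    by (rule finite_subset)
qed

lemma Mset_decompose:
  assumes "u \<in> Mset a m"
  obtains b t where "b \<in> Bset a m" "u = b + (\<Sum>j=1..m. of_nat (t j) *s a j)"
proof -
  obtain c where c: "\<forall>j\<in>{1..m}. 0 \<le> c j" "rvec u = (\<Sum>j=1..m. c j *\<^sub>R ra j)"
    using assms unfolding Mset_iff by blast
  define t where "t j = nat \<lfloor>c j\<rfloor>" for j
  have frac: "0 \<le> c j - real (t j) \<and> c j - real (t j) < 1" if "j \<in> {1..m}" for j
  proof -
    have "real (t j) = of_int \<lfloor>c j\<rfloor>"
      using c(1) that by (simp add: t_def)
    then show ?thesis
      using of_int_floor_le[of "c j"] real_of_int_floor_add_one_gt[of "c j"] by linarith
  qed
  have "rvec (u - (\<Sum>j=1..m. of_nat (t j) *s a j)) = (\<Sum>j=1..m. (c j - real (t j)) *\<^sub>R ra j)"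
    using c(2) by (simp add: rvec_sum scaleR_diff_left sum_subtractf)
  then have "u - (\<Sum>j=1..m. of_nat (t j) *s a j) \<in> Bset a m"
    unfolding Bset_iff using frac by (intro exI[of _ "\<lambda>j. c j - real (t j)"]) simp
  then show ?thesis
    by (rule that) simp
qed

lemma Mset_induct [consumes 1, case_names base step]:
  assumes "u \<in> Mset a m"
    and base: "\<And>b. b \<in> Bset a m \<Longrightarrow> P b"
    and step: "\<And>u j. u \<in> Mset a m \<Longrightarrow> P u \<Longrightarrow> j \<in> {1..m} \<Longrightarrow> P (u + a j)"
  shows "P u"
proof -
  obtain b t where b: "b \<in> Bset a m" and u: "u = b + (\<Sum>j=1..m. of_nat (t j) *s a j)"
    using Mset_decompose[OF assms(1)] .
  have step_n: "P (v + of_nat n *s a j)" if "v \<in> Mset a m" "P v" "j \<in> {1..m}" for v j n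
  proof (induction n)
    case (Suc n)
    have eq: "v + of_nat (Suc n) *s a j = (v + of_nat n *s a j) + a j"
      by (simp add: vec_eq_iff algebra_simps)
    have "v + of_nat n *s a j \<in> Mset a m"
      using that by (simp add: Mset_add of_nat_scale_in_Mset a_in_Mset)
    then show ?case
      unfolding eq using step Suc that(3) by blast
  qed (use that in simp)
  have "b + (\<Sum>j\<in>J. of_nat (t j) *s a j) \<in> Mset a m \<and> P (b + (\<Sum>j\<in>J. of_nat (t j) *s a j))"
    if "J \<subseteq> {1..m}" for J
    using finite_subset[OF that finite_atLeastAtMost] that
  proof (induction J rule: finite_induct)
    case (insert j J)
    let ?v = "b + (\<Sum>j\<in>J. of_nat (t j) *s a j)"
    have eq: "b + (\<Sum>j\<in>insert j J. of_nat (t j) *s a j) = ?v + of_nat (t j) *s a j"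
      using insert by (simp add: add_ac)
    show ?case
      unfolding eq using insert step_n[of ?v j "t j"]
      by (simp add: Mset_add of_nat_scale_in_Mset a_in_Mset)
  qed (use b Bset_subset_Mset base in simp)
  then show ?thesis
    unfolding u by blast
qed

lemma translates_in_Mset:
  assumes "supp p \<subseteq> Mset a m" "j \<in> {0..m}"
  shows "(\<lambda>u. u + a j) ` supp p \<subseteq> Mset a m"
  using assms a_in_Mset a0_in_Mset Mset_add by (cases "j = 0") auto

lemma Dop_in_Sset:
  assumes "p \<in> Sset a m"
  shows "Dop a l m i p \<in> Sset a m"
proof -
  let ?F = "supp p \<union> (\<Union>j\<in>{0..m}. (\<lambda>u. u + a j) ` supp p)"
  have p: "finite (supp p)" "supp p \<subseteq> Mset a m"
    using assms by (simp_all add: Sset_iff)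
  then have "finite ?F" "?F \<subseteq> Mset a m"
    using translates_in_Mset[OF p(2)] by (simp_all add: UN_subset_iff)
  then show ?thesis
    using supp_Dop_subset[of a l m i p] unfolding Sset_iff by (meson finite_subset subset_trans)
qed

lemma Dlam_in_Sset:
  assumes "p \<in> Sset a m"
  shows "Dlam a l p \<in> Sset a m"
proof -
  let ?F = "supp p \<union> (\<lambda>u. u + a 0) ` supp p"
  have "finite ?F" "?F \<subseteq> Mset a m"
    using assms translates_in_Mset[of p 0] by (simp_all add: Sset_iff)
  then show ?thesis
    using supp_Dlam_subset[of a l p] unfolding Sset_iff by (meson finite_subset subset_trans)
qed

section \<open>The coefficients g and the series G\<close>

lemma sum_shift_scaleR:
  assumes "j \<in> {1..m}"
  shows "(\<Sum>k=1..m. (f k - (if k = j then x else 0)) *\<^sub>R ra k)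
    = (\<Sum>k=1..m. f k *\<^sub>R ra k) - x *\<^sub>R ra j"
  by (simp only: scaleR_diff_left sum_subtractf sum_delta_scaleR[OF assms])

lemma sRep_unique:
  assumes "sRep a m b u s" "sRep a m b u s'"
  shows "s = s'"
proof
  fix j
  show "s j = s' j"
  proof (cases "j \<in> {1..m}")
    case True
    then show ?thesis
      using assms coord_unique[of "\<lambda>k. vcoef a m b k - real_of_int (s k)"
          "\<lambda>k. vcoef a m b k - real_of_int (s' k)" j]
      by (simp add: sRep_def)
  qed (use assms in \<open>simp add: sRep_def\<close>)
qed

lemma gcoef_eq:
  assumes "sRep a m b u s"
  shows "gcoef a l m b u
    = (\<Prod>j=1..m. brk (- complex_of_real (vcoef a m b j)) (s j) * of_nat (l j) powi s j)"
proof -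
  have "(THE s. sRep a m b u s) = s"
    using assms sRep_unique by blast
  then show ?thesis
    using assms by (auto simp: gcoef_def)
qed

lemma sRep_add_a:
  assumes s: "sRep a m b w s" and j: "j \<in> {1..m}"
  shows "sRep a m b (w + a j) (s(j := s j - 1))"
proof -
  have "rvec (w + a j) = (\<Sum>k=1..m. (vcoef a m b k - real_of_int (s k)) *\<^sub>R ra k) - (- 1) *\<^sub>R ra j"
    using s by (simp add: sRep_def)
  also have "\<dots>
      = (\<Sum>k=1..m. ((vcoef a m b k - real_of_int (s k)) - (if k = j then - 1 else 0)) *\<^sub>R ra k)"
    by (rule sum_shift_scaleR[OF j, symmetric])
  also have "\<dots> = (\<Sum>k=1..m. (vcoef a m b k - real_of_int ((s(j := s j - 1)) k)) *\<^sub>R ra k)"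
    by (intro sum.cong) auto
  finally have
    "rvec (w + a j) = (\<Sum>k=1..m. (vcoef a m b k - real_of_int ((s(j := s j - 1)) k)) *\<^sub>R ra k)" .
  moreover have "\<forall>k\<in>{1..m}. s k \<le> 0" "\<forall>k. k \<notin> {1..m} \<longrightarrow> s k = 0"
    using s by (simp_all add: sRep_def)
  ultimately show ?thesis
    using j unfolding sRep_def by (auto simp del: atLeastAtMost_iff)
qed

lemma gcoef_add_a:
  assumes s: "sRep a m b w s" and j: "j \<in> {1..m}"
  shows "gcoef a l m b (w + a j)
    = gcoef a l m b w * ((- complex_of_real (vcoef a m b j) + of_int (s j)) / of_nat (l j))"
proof -
  define f where "f s' k = brk (- complex_of_real (vcoef a m b k)) (s' k) * of_nat (l k) powi s' k"
    for s' k
  have split: "(\<Prod>k=1..m. f s' k) = f s' j * (\<Prod>k\<in>{1..m} - {j}. f s' k)" for s'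
    using j by (simp add: prod.remove)
  have "s j \<le> 0"
    using s j by (simp add: sRep_def)
  then have "f (s(j := s j - 1)) j
      = f s j * ((- complex_of_real (vcoef a m b j) + of_int (s j)) / of_nat (l j))"
    using l_nonzero[of j] j by (simp add: f_def brk_pred power_int_diff)
  moreover have "(\<Prod>k\<in>{1..m} - {j}. f (s(j := s j - 1)) k) = (\<Prod>k\<in>{1..m} - {j}. f s k)"
    by (rule prod.cong) (auto simp: f_def)
  ultimately show ?thesis
    unfolding gcoef_eq[OF s] gcoef_eq[OF sRep_add_a[OF s j]] f_def[symmetric] split
    by (simp only: mult_ac)
qed

lemma sRep_of_add_a:
  assumes b: "b \<in> Bset a m" and w: "w \<in> Mset a m" and j: "j \<in> {1..m}"
    and s: "sRep a m b (w + a j) s"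
  shows "sRep a m b w (s(j := s j + 1))"
proof -
  obtain c where c: "\<forall>k\<in>{1..m}. 0 \<le> c k" "rvec w = (\<Sum>k=1..m. c k *\<^sub>R ra k)"
    using w unfolding Mset_iff by blast
  have "rvec w = rvec (w + a j) - 1 *\<^sub>R ra j"
    by simp
  also have "\<dots> = (\<Sum>k=1..m. (vcoef a m b k - real_of_int (s k)) *\<^sub>R ra k) - 1 *\<^sub>R ra j"
    using s by (simp only: sRep_def)
  also have "\<dots>
      = (\<Sum>k=1..m. ((vcoef a m b k - real_of_int (s k)) - (if k = j then 1 else 0)) *\<^sub>R ra k)"
    by (rule sum_shift_scaleR[OF j, symmetric])
  also have "\<dots> = (\<Sum>k=1..m. (vcoef a m b k - real_of_int ((s(j := s j + 1)) k)) *\<^sub>R ra k)"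
    by (intro sum.cong) auto
  finally have eq:
    "rvec w = (\<Sum>k=1..m. (vcoef a m b k - real_of_int ((s(j := s j + 1)) k)) *\<^sub>R ra k)" .
  have "c j = vcoef a m b j - real_of_int (s j + 1)"
    using coord_unique[OF trans[OF c(2)[symmetric] eq] j] by simp
  moreover have "0 \<le> c j" "vcoef a m b j < 1"
    using c(1) vcoef_spec(1)[OF b] j by blast+
  ultimately have "real_of_int (s j + 1) < 1"
    by linarith
  then have "s j + 1 \<le> 0"
    by linarith
  moreover have "\<forall>k\<in>{1..m}. s k \<le> 0" "\<forall>k. k \<notin> {1..m} \<longrightarrow> s k = 0"
    using s by (simp_all add: sRep_def)
  ultimately show ?thesis
    using j eq unfolding sRep_def by (auto simp del: atLeastAtMost_iff)
qed

lemma gcoef_recurrence: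
  assumes b: "b \<in> Bset a m" and w: "w \<in> Mset a m"
  shows "of_int (w $ i) * gcoef a l m b w
    + (\<Sum>j=1..m. of_nat (l j) * of_int (a j $ i) * gcoef a l m b (w + a j)) = 0"
proof (cases "\<exists>s. sRep a m b w s")
  case False
  then have "\<not> (\<exists>s. sRep a m b (w + a j) s)" if "j \<in> {1..m}" for j
    using sRep_of_add_a[OF b w that] by blast
  then show ?thesis
    using False by (simp add: gcoef_def)
next
  case True
  then obtain s where s: "sRep a m b w s"
    by blast
  define r where "r j = vcoef a m b j - real_of_int (s j)" for j
  have w_i: "of_int (w $ i) = (\<Sum>j=1..m. complex_of_real (r j) * of_int (a j $ i))"
  proof -
    have "real_of_int (w $ i) = (\<Sum>j=1..m. r j * real_of_int (a j $ i))"
      using arg_cong[OF s[unfolded sRep_def, THEN conjunct2, THEN conjunct2], of "\<lambda>x. x $ i"]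
      by (simp add: rvec_nth r_def)
    from arg_cong[OF this, of complex_of_real] show ?thesis
      by simp
  qed
  have "(\<Sum>j=1..m. of_nat (l j) * of_int (a j $ i) * gcoef a l m b (w + a j))
      = - (gcoef a l m b w * (\<Sum>j=1..m. complex_of_real (r j) * of_int (a j $ i)))"
    unfolding sum_distrib_left sum_negf[symmetric]
  proof (rule sum.cong)
    fix j
    assume j: "j \<in> {1..m}"
    then have "(of_nat (l j) :: complex) \<noteq> 0"
      using l_nonzero[of j] by simp
    then show "of_nat (l j) * of_int (a j $ i) * gcoef a l m b (w + a j)
        = - (gcoef a l m b w * (complex_of_real (r j) * of_int (a j $ i)))"
      by (simp add: gcoef_add_a[OF s j] r_def field_simps)
  qed simp
  then show ?thesis
    unfolding w_i by simp
qed

lemma gcoef_Bset: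
  assumes b: "b \<in> Bset a m" and b': "b' \<in> Bset a m"
  shows "gcoef a l m b b' = (if b = b' then 1 else 0)"
proof (cases "b = b'")
  case True
  have "sRep a m b b (\<lambda>j. 0)"
    using vcoef_spec(2)[OF b] by (simp add: sRep_def)
  then show ?thesis
    using True by (simp add: gcoef_eq brk_def)
next
  case False
  have "\<not> sRep a m b b' s" for s
  proof
    assume s: "sRep a m b b' s"
    have "s j = 0" if j: "j \<in> {1..m}" for j
    proof -
      have "vcoef a m b' j = vcoef a m b j - real_of_int (s j)"
        using coord_unique[OF trans[OF vcoef_spec(2)[OF b', symmetric]] j] s by (simp add: sRep_def)
      moreover have "s j \<le> 0"
        using s j by (simp add: sRep_def)
      moreover have "0 \<le> vcoef a m b j" "vcoef a m b' j < 1"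
        using vcoef_spec(1)[OF b] vcoef_spec(1)[OF b'] j by blast+
      ultimately have "- 1 < real_of_int (s j)"
        by linarith
      with \<open>s j \<le> 0\<close> show "s j = 0"
        by linarith
    qed
    then have "rvec b' = rvec b"
      using s vcoef_spec(2)[OF b] by (simp add: sRep_def)
    then show False
      using False by (simp add: rvec_inject)
  qed
  then show ?thesis
    using False by (simp add: gcoef_def)
qed

lemma Gser_recurrence_nth:
  assumes b: "b \<in> Bset a m" and u: "u \<in> Mset a m"
  shows "(\<Sum>j=1..m. of_nat (l j) * of_int (a j $ i) * fps_nth (Gser a l m b (u + a j)) k)
    = - (of_int (u $ i) + of_nat k * of_int (a 0 $ i)) * fps_nth (Gser a l m b u) k"
proof -
  define w where "w = u + of_nat k *s a 0"
  define c where "c = (- of_nat (l 0) :: complex) ^ k / fact k"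
  have "w \<in> Mset a m"
    using u by (simp add: w_def Mset_add of_nat_scale_in_Mset a0_in_Mset)
  then have recurrence: "(\<Sum>j=1..m. of_nat (l j) * of_int (a j $ i) * gcoef a l m b (w + a j))
      = - (of_int (w $ i) * gcoef a l m b w)"
    using gcoef_recurrence[OF b] by (simp add: eq_neg_iff_add_eq_0 add.commute)
  have "(\<Sum>j=1..m. of_nat (l j) * of_int (a j $ i) * fps_nth (Gser a l m b (u + a j)) k)
      = (\<Sum>j=1..m. of_nat (l j) * of_int (a j $ i) * gcoef a l m b (w + a j)) * c"
    unfolding sum_distrib_right
    by (intro sum.cong refl) (simp add: Gser_nth c_def w_def algebra_simps)
  also have "\<dots> = - (of_int (w $ i) * gcoef a l m b w) * c"
    by (simp only: recurrence)
  also have "\<dots> = - (of_int (u $ i) + of_nat k * of_int (a 0 $ i)) * fps_nth (Gser a l m b u) k"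
    by (simp add: Gser_nth w_def c_def field_simps)
  finally show ?thesis .
qed

lemma Dop_adj_Gser:
  assumes b: "b \<in> Bset a m" and u: "u \<in> Mset a m"
  shows "Dop_adj a l m (Gser a l m b) i u = 0"
proof (rule fps_ext)
  fix k
  show "fps_nth (Dop_adj a l m (Gser a l m b) i u) k = fps_nth 0 k"
  proof (cases k)
    case 0
    then show ?thesis
      unfolding Dop_adj_nth Gser_recurrence_nth[OF b u] by simp
  next
    case (Suc k')
    define G where "G = Gser a l m b"
    have deriv: "of_nat k * fps_nth (G u) k + of_nat (l 0) * fps_nth (G (u + a 0)) k' = 0"
      using arg_cong[OF fps_deriv_Gser[of a l m b u], of "\<lambda>f. fps_nth f k'"] Suc
      by (simp add: G_def fps_deriv_nth)
    have "(if k = 0 then 0 else fps_nth (G (u + a 0)) (k - 1)) = fps_nth (G (u + a 0)) k'"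
      using Suc by simp
    then have "fps_nth (Dop_adj a l m G i u) k
        = - of_int (a 0 $ i)
          * (of_nat k * fps_nth (G u) k + of_nat (l 0) * fps_nth (G (u + a 0)) k')"
      unfolding Dop_adj_nth Gser_recurrence_nth[OF b u, folded G_def] by (simp add: algebra_simps)
    then show ?thesis
      using deriv by (simp add: G_def)
  qed
qed

lemma xi_xpow: "u \<in> Mset a m \<Longrightarrow> xi a l m b (xpow u) = Gser a l m b u"
  by (simp add: xi_eq_lin_ext xpow_in_Sset)

lemma xi_in_HomD:
  assumes b: "b \<in> Bset a m"
  shows "xi a l m b \<in> HomD a l m"
  unfolding HomD_def mem_Collect_eq
proof (intro conjI ballI allI impI)
  fix p q r
  assume p: "p \<in> Sset a m" and q: "q \<in> Sset a m"
  then have fin: "finite (supp p)" "finite (supp q)"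
    by (simp_all add: Sset_iff)
  show "xi a l m b (\<lambda>u. p u + q u) = xi a l m b p + xi a l m b q"
    using p q fin by (simp add: xi_eq_lin_ext Sset_add lin_ext_add)
  show "xi a l m b (\<lambda>u. r * p u) = fps_of_poly r * xi a l m b p"
    using p fin by (simp add: xi_eq_lin_ext Sset_scale lin_ext_scale)
  show "xi a l m b (Dlam a l p) = fps_deriv (xi a l m b p)"
    using p fin by (simp add: xi_eq_lin_ext Dlam_in_Sset lin_ext_Dlam fps_deriv_Gser)
next
  fix p
  assume "p \<notin> Sset a m"
  then show "xi a l m b p = 0"
    by (simp add: xi_def)
next
  fix q
  assume "q \<in> DS a l m"
  then obtain ps where ps: "\<And>i. ps i \<in> Sset a m" and q: "q = (\<lambda>w. \<Sum>i\<in>UNIV. Dop a l m i (ps i) w)"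
    unfolding DS_def by blast
  have "lin_ext (Gser a l m b) (Dop a l m i (ps i)) = 0" for i
  proof -
    have "lin_ext (Gser a l m b) (Dop a l m i (ps i))
        = lin_ext (Dop_adj a l m (Gser a l m b) i) (ps i)"
      using ps[of i] by (simp add: lin_ext_Dop Sset_iff)
    also have "\<dots> = 0"
      using ps[of i] unfolding lin_ext_def Sset_iff
      by (intro sum.neutral) (auto simp: Dop_adj_Gser[OF b])
    finally show ?thesis .
  qed
  moreover have "q \<in> Sset a m"
    unfolding q using ps by (simp add: Sset_sum Dop_in_Sset)
  moreover have "finite (supp (Dop a l m i (ps i)))" for i
    using Dop_in_Sset[OF ps] by (simp add: Sset_iff)
  ultimately show "xi a l m b q = 0"
    by (simp add: xi_eq_lin_ext q lin_ext_sum)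
qed

section \<open>Homomorphisms are determined by their constant terms on B\<close>

lemma HomD_xpow_deriv:
  assumes \<phi>: "\<phi> \<in> HomD a l m" and u: "u \<in> Mset a m"
  shows "fps_deriv (\<phi> (xpow u)) = - fps_const (of_nat (l 0)) * \<phi> (xpow (u + a 0))"
proof -
  have shifted: "xpow (u + a 0) \<in> Sset a m"
    by (simp add: xpow_in_Sset Mset_add u a0_in_Mset)
  have "fps_deriv (\<phi> (xpow u)) = \<phi> (Dlam a l (xpow u))"
    by (rule HomD_Dlam[OF \<phi> xpow_in_Sset[OF u], symmetric])
  also have "\<dots> = fps_of_poly (- of_nat (l 0)) * \<phi> (xpow (u + a 0))"
    unfolding Dlam_xpow by (rule HomD_scale[OF \<phi> shifted])
  finally show ?thesis
    by (simp add: fps_of_poly_uminus fps_of_poly_of_nat)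
qed

lemma HomD_xpow_Dop_adj:
  assumes \<phi>: "\<phi> \<in> HomD a l m" and u: "u \<in> Mset a m"
  shows "Dop_adj a l m (\<lambda>v. \<phi> (xpow v)) i u = 0"
proof -
  have "Dop_adj a l m (\<lambda>v. \<phi> (xpow v)) i u = lin_ext (\<lambda>v. \<phi> (xpow v)) (Dop a l m i (xpow u))"
    by (simp add: lin_ext_Dop)
  also have "\<dots> = \<phi> (Dop a l m i (xpow u))"
    by (simp add: HomD_eq_lin_ext[OF \<phi>] Dop_in_Sset xpow_in_Sset u)
  also have "\<dots> = 0"
    by (simp add: HomD_DS[OF \<phi>] Dop_in_DS xpow_in_Sset u)
  finally show ?thesis .
qed

lemma HomD_xpow_const_coeff_step:
  assumes \<phi>: "\<phi> \<in> HomD a l m" and u: "u \<in> Mset a m"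
    and zero: "fps_nth (\<phi> (xpow u)) 0 = 0" and j: "j \<in> {1..m}"
  shows "fps_nth (\<phi> (xpow (u + a j))) 0 = 0"
proof -
  define c where "c k = of_nat (l k) * fps_nth (\<phi> (xpow (u + a k))) 0" for k
  have "(\<Sum>k=1..m. c k * of_real (ra k $ i)) = 0" for i
    using arg_cong[OF HomD_xpow_Dop_adj[OF \<phi> u, of i], of "\<lambda>f. fps_nth f 0"] zero
    by (simp add: Dop_adj_nth c_def rvec_nth mult_ac)
  then have "c j = 0"
    using independent_image_complex_coeff_eq_0[OF indep inj_on_ra] j by simp
  then show ?thesis
    using l_nonzero[of j] j by (simp add: c_def)
qed

lemma HomD_xpow_eq_0:
  assumes \<theta>: "\<theta> \<in> HomD a l m" and zero: "\<And>b. b \<in> Bset a m \<Longrightarrow> fps_nth (\<theta> (xpow b)) 0 = 0"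
    and u: "u \<in> Mset a m"
  shows "\<theta> (xpow u) = 0"
proof -
  have const: "fps_nth (\<theta> (xpow v)) 0 = 0" if "v \<in> Mset a m" for v
    using that
  proof (induction rule: Mset_induct)
    case (step v j)
    then show ?case
      using HomD_xpow_const_coeff_step[OF \<theta>] by blast
  qed (rule zero)
  have "\<forall>v\<in>Mset a m. fps_nth (\<theta> (xpow v)) k = 0" for k
  proof (induction k)
    case (Suc k)
    show ?case
    proof
      fix v
      assume v: "v \<in> Mset a m"
      have "of_nat (Suc k) * fps_nth (\<theta> (xpow v)) (Suc k) = fps_nth (fps_deriv (\<theta> (xpow v))) k"
        by (simp add: fps_deriv_nth mult.commute)
      also have "\<dots> = 0"
        using Suc v by (simp add: HomD_xpow_deriv[OF \<theta> v] Mset_add a0_in_Mset)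
      finally show "fps_nth (\<theta> (xpow v)) (Suc k) = 0"
        by (simp del: of_nat_Suc)
    qed
  qed (use const in blast)
  then show ?thesis
    using u by (simp add: fps_eq_iff)
qed

lemma HomD_eq_if_const_coeffs_eq:
  assumes \<phi>: "\<phi> \<in> HomD a l m" and \<psi>: "\<psi> \<in> HomD a l m"
    and eq: "\<And>b. b \<in> Bset a m \<Longrightarrow> fps_nth (\<phi> (xpow b)) 0 = fps_nth (\<psi> (xpow b)) 0"
  shows "\<phi> = \<psi>"
proof
  fix p
  define \<theta> where "\<theta> = (\<lambda>p. \<phi> p - \<psi> p)"
  have \<theta>: "\<theta> \<in> HomD a l m"
    unfolding \<theta>_def by (rule HomD_diff[OF \<phi> \<psi>])
  have vanish: "\<theta> (xpow u) = 0" if "u \<in> Mset a m" for u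
    using HomD_xpow_eq_0[OF \<theta> _ that] eq by (simp add: \<theta>_def)
  have "\<theta> p = 0"
  proof (cases "p \<in> Sset a m")
    case True
    then have "supp p \<subseteq> Mset a m"
      by (simp add: Sset_iff)
    then show ?thesis
      using vanish by (auto simp: HomD_eq_lin_ext[OF \<theta> True] lin_ext_def intro!: sum.neutral)
  qed (rule HomD_outside[OF \<theta>])
  then show "\<phi> p = \<psi> p"
    by (simp add: \<theta>_def)
qed

lemma lincomb_xi_xpow_const_coeff:
  assumes b': "b' \<in> Bset a m"
  shows "fps_nth (\<Sum>b\<in>Bset a m. fps_const (c b) * xi a l m b (xpow b')) 0 = c b'"
proof -
  have "fps_nth (\<Sum>b\<in>Bset a m. fps_const (c b) * xi a l m b (xpow b')) 0
      = (\<Sum>b\<in>Bset a m. if b = b' then c b else 0)"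
    unfolding fps_sum_nth
    by (intro sum.cong refl) (simp add: xi_xpow Bset_subset_Mset b' Gser_nth gcoef_Bset)
  also have "\<dots> = c b'"
    using finite_Bset b' by simp
  finally show ?thesis .
qed

lemma xi_linearly_independent:
  assumes "\<forall>p\<in>Sset a m. (\<Sum>b\<in>Bset a m. fps_const (c b) * xi a l m b p) = 0"
    and b': "b' \<in> Bset a m"
  shows "c b' = 0"
  using lincomb_xi_xpow_const_coeff[OF b', of c] assms(1) xpow_in_Sset[OF Bset_subset_Mset[OF b']]
  by simp

lemma HomD_spanned_by_xi:
  assumes \<phi>: "\<phi> \<in> HomD a l m"
  shows "\<phi> = (\<lambda>p. \<Sum>b\<in>Bset a m. fps_const (fps_nth (\<phi> (xpow b)) 0) * xi a l m b p)"
  by (rule HomD_eq_if_const_coeffs_eq[OF \<phi> HomD_lincomb[OF finite_Bset xi_in_HomD]])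
    (simp_all add: lincomb_xi_xpow_const_coeff)

end

theorem corollary3p18:
  fixes a :: "nat \<Rightarrow> int ^ 'n" and l :: "nat \<Rightarrow> nat" and m :: nat
  assumes indep: "independent ((\<lambda>j. rvec (a j)) ` {1..m})"
      and inj: "inj_on a {1..m}"
      and lpos: "\<forall>j\<in>{0..m}. 0 < l j"
      and lgcd: "Gcd (l ` {0..m}) = 1"
      and rel: "of_nat (l 0) *s a 0 = (\<Sum>j=1..m. of_nat (l j) *s a j)"
      and l0: "l 0 = (\<Sum>j=1..m. l j)"
  shows "finite (Bset a m)
     \<and> (\<forall>b\<in>Bset a m. (\<forall>q\<in>DS a l m. xi a l m b q = 0) \<and> xi a l m b \<in> HomD a l m)
     \<and> (\<forall>c :: int ^ 'n \<Rightarrow> complex.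
           (\<forall>p\<in>Sset a m. (\<Sum>b\<in>Bset a m. fps_const (c b) * xi a l m b p) = 0)
           \<longrightarrow> (\<forall>b\<in>Bset a m. c b = 0))
     \<and> (\<forall>\<phi>\<in>HomD a l m. \<exists>c :: int ^ 'n \<Rightarrow> complex.
           \<phi> = (\<lambda>p. \<Sum>b\<in>Bset a m. fps_const (c b) * xi a l m b p))"
proof -
  interpret positive_relation a l m
    using indep inj lpos rel by unfold_locales
  show ?thesis
  proof (intro conjI ballI allI impI)
    fix b q
    assume "b \<in> Bset a m" "q \<in> DS a l m"
    then show "xi a l m b q = 0"
      by (rule HomD_DS[OF xi_in_HomD])
  next
    fix \<phi>
    assume "\<phi> \<in> HomD a l m"
    then show "\<exists>c. \<phi> = (\<lambda>p. \<Sum>b\<in>Bset a m. fps_const (c b) * xi a l m b p)"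
      by (intro exI[of _ "\<lambda>b. fps_nth (\<phi> (xpow b)) 0"] HomD_spanned_by_xi)
  qed (auto simp: finite_Bset xi_in_HomD intro: xi_linearly_independent)
qed

end
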